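(* Let $(M,F)$ be a Finsler manifold, $V$ a homothetic vector field with dilation $c$ and flow $\Psi_t$, with $F(x,-V(x))>1$ everywhere. Let $f$ be a transnormal function defined near $x_0$ with $f(x_0)=0$, $F(\nabla^F f)\equiv1$, and $\langle\nabla^F f(x),V(x)\rangle^F_{\nabla^F f(x)}<-1$ near $x_0$. Let $M_s=f^{-1}(s)$ and define $\Psi$ near $x_0$ by $\Psi|_{M_{\alpha_c(t)}}=\Psi_t$ (for $t$ near $0$). Then, on a sufficiently small neighborhood of $x_0$, $\Psi$ is an orientation reversing diffeomorphism onto its image.
   Context: Finsler metric $F$ with fundamental tensor $\langle u,v\rangle^F_y=\frac12\frac{\partial^2}{\partial s\partial t}|_0F^2(y+su+tv)$. Gradient $\nabla^F f$: the vector field with $\langle\nabla^F f,u\rangle^F_{\nabla^F f}=\mathrm df(u)$. Transnormal: $F(\nabla^F f)$ depends only on values of $f$. $V$ homothetic with dilation $c$: flow satisfies $F(\Psi_t(x),(\Psi_t)_*y)=e^{-2ct}F(x,y)$. $\alpha_c(t)=t$ if $c=0$, $\alpha_c(t)=\frac{e^{2ct}-1}{2c}$ otherwise. *)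

theory Defs
  imports "HOL-Analysis.Analysis"
begin

fun Ck_on :: "nat \<Rightarrow> 'a::euclidean_space set \<Rightarrow> ('a \<Rightarrow> 'b::real_normed_vector) \<Rightarrow> bool" where
  "Ck_on 0 S g = continuous_on S g"
| "Ck_on (Suc k) S g =
     ((\<forall>x\<in>S. g differentiable (at x)) \<and>
      (\<forall>v. Ck_on k S (\<lambda>x. frechet_derivative g (at x) v)))"

definition smooth_on :: "'a::euclidean_space set \<Rightarrow> ('a \<Rightarrow> 'b::real_normed_vector) \<Rightarrow> bool" where
  "smooth_on S g \<longleftrightarrow> open S \<and> (\<forall>k. Ck_on k S g)"

definition fund_tensor ::
  "(real^'n \<Rightarrow> real^'n \<Rightarrow> real) \<Rightarrow> real^'n \<Rightarrow> real^'n \<Rightarrow> real^'n \<Rightarrow> real^'n \<Rightarrow> real"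
  where "fund_tensor F x y u v =
     (1/2) * deriv (\<lambda>s. deriv (\<lambda>t. (F x (y + s *\<^sub>R u + t *\<^sub>R v))^2) 0) 0"

text \<open>Finsler metric on the open set U (a chart domain of M), F(x,y) for y in T_xM = R^n.\<close>
definition finsler_metric :: "(real^'n) set \<Rightarrow> (real^'n \<Rightarrow> real^'n \<Rightarrow> real) \<Rightarrow> bool" where
  "finsler_metric U F \<longleftrightarrow>
     open U \<and>
     continuous_on (U \<times> UNIV) (\<lambda>(x,y). F x y) \<and>
     smooth_on (U \<times> (UNIV - {0})) (\<lambda>(x,y). F x y) \<and>
     (\<forall>x\<in>U. \<forall>y. y \<noteq> 0 \<longrightarrow> F x y > 0) \<and>
     (\<forall>x\<in>U. \<forall>y. \<forall>r>0. F x (r *\<^sub>R y) = r * F x y) \<and>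
     (\<forall>x\<in>U. \<forall>y. y \<noteq> 0 \<longrightarrow> (\<forall>u. u \<noteq> 0 \<longrightarrow> fund_tensor F x y u u > 0))"

definition is_finsler_gradient ::
  "(real^'n \<Rightarrow> real^'n \<Rightarrow> real) \<Rightarrow> (real^'n \<Rightarrow> real) \<Rightarrow> real^'n \<Rightarrow> real^'n \<Rightarrow> bool" where
  "is_finsler_gradient F f x g \<longleftrightarrow> (\<forall>u. fund_tensor F x g g u = frechet_derivative f (at x) u)"

definition is_local_flow ::
  "(real^'n) set \<Rightarrow> (real^'n \<Rightarrow> real^'n) \<Rightarrow> (real \<times> (real^'n)) set \<Rightarrow> (real \<Rightarrow> real^'n \<Rightarrow> real^'n) \<Rightarrow> bool" where
  "is_local_flow U V D Psi \<longleftrightarrow>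
     open D \<and> D \<subseteq> UNIV \<times> U \<and> (\<forall>x\<in>U. (0, x) \<in> D) \<and>
     (\<forall>x\<in>U. is_interval {t. (t, x) \<in> D}) \<and>
     smooth_on D (\<lambda>(t,x). Psi t x) \<and>
     (\<forall>(t,x)\<in>D. Psi t x \<in> U) \<and>
     (\<forall>x\<in>U. Psi 0 x = x) \<and>
     (\<forall>(t,x)\<in>D. ((\<lambda>s. Psi s x) has_vector_derivative V (Psi t x)) (at t))"

definition homothetic ::
  "(real^'n \<Rightarrow> real^'n \<Rightarrow> real) \<Rightarrow> (real \<times> (real^'n)) set \<Rightarrow> (real \<Rightarrow> real^'n \<Rightarrow> real^'n) \<Rightarrow> real \<Rightarrow> bool" where
  "homothetic F D Psi c \<longleftrightarrow>
     (\<forall>(t,x)\<in>D. \<forall>y. F (Psi t x) (frechet_derivative (Psi t) (at x) y) = exp (-2*c*t) * F x y)"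

definition alpha :: "real \<Rightarrow> real \<Rightarrow> real" where
  "alpha c t = (if c = 0 then t else (exp (2*c*t) - 1) / (2*c))"

text \<open>The map Psi with Psi restricted to M_{alpha_c(t)} equal to Psi_t.\<close>
definition level_flow_map ::
  "real \<Rightarrow> (real^'n \<Rightarrow> real) \<Rightarrow> (real \<Rightarrow> real^'n \<Rightarrow> real^'n) \<Rightarrow> real^'n \<Rightarrow> real^'n" where
  "level_flow_map c f Psi x = Psi (THE t. alpha c t = f x) x"

definition diffeo_onto_image :: "(real^'n) set \<Rightarrow> (real^'n \<Rightarrow> real^'n) \<Rightarrow> bool" where
  "diffeo_onto_image N g \<longleftrightarrow>
     open N \<and> inj_on g N \<and> open (g ` N) \<and> smooth_on N g \<and> smooth_on (g ` N) (the_inv_into N g)"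

definition orientation_reversing_on :: "(real^'n) set \<Rightarrow> (real^'n \<Rightarrow> real^'n) \<Rightarrow> bool" where
  "orientation_reversing_on N g \<longleftrightarrow>
     (\<forall>x\<in>N. det (matrix (frechet_derivative g (at x))) < 0)"

end

theory Submission
  imports Defs
begin

(*
  Near x0 write Psi x = Psi_(tau x) x with tau = alpha_c^-1 o f; tau is smooth where 1 + 2 c f > 0,
  tau x0 = 0 and d tau (x0) = df (x0). Since Psi_0 = id and d/dt Psi_t = V, the chain rule gives
  D Psi (x0) = id + V(x0) df(x0), a rank-one perturbation of the identity with determinant
  1 + df(x0)(V x0) = 1 + <grad f, V>_(grad f), which is negative by hypothesis (df is read off
  from the defining identity of the Finsler gradient). The inverse function theorem, with Cramer's
  rule giving smoothness of the inverse, makes Psi a diffeomorphism on a neighbourhood of x0 on which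
  the Jacobian determinant stays negative.
*)

section \<open>C^k calculus\<close>

lemma Ck_on_subset: "Ck_on k S g \<Longrightarrow> T \<subseteq> S \<Longrightarrow> Ck_on k T g"
  by (induction k arbitrary: g) (auto intro: continuous_on_subset)

lemma Ck_on_Suc_imp_Ck_on: "Ck_on (Suc k) S g \<Longrightarrow> Ck_on k S g"
proof (induction k arbitrary: g)
  case 0
  then show ?case
    by (auto intro!: continuous_at_imp_continuous_on differentiable_imp_continuous_within)
next
  case (Suc k)
  then show ?case by simp
qed

lemma Ck_on_Suc_has_derivative:
  "Ck_on (Suc k) S g \<Longrightarrow> x \<in> S \<Longrightarrow> (g has_derivative frechet_derivative g (at x)) (at x)"
  by (simp add: frechet_derivative_works[symmetric])

lemma Ck_on_Suc_frechet_derivative: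
  "Ck_on (Suc k) S g \<Longrightarrow> Ck_on k S (\<lambda>x. frechet_derivative g (at x) v)"
  by simp

lemma Ck_on_cong:
  assumes "open S" "\<And>x. x \<in> S \<Longrightarrow> g x = h x"
  shows "Ck_on k S g = Ck_on k S h"
  using assms(2)
proof (induction k arbitrary: g h)
  case 0
  then show ?case by (simp cong: continuous_on_cong)
next
  case (Suc k)
  have diff: "g differentiable (at x) \<longleftrightarrow> h differentiable (at x)" if "x \<in> S" for x
    using has_derivative_transform_within_open[OF _ assms(1) that] Suc.prems
    unfolding differentiable_def by metis
  have "frechet_derivative g (at x) = frechet_derivative h (at x)"
    if "x \<in> S" "g differentiable (at x)" for x
    using frechet_derivative_transform_within_open[OF that(2) assms(1) that(1)] Suc.prems by blast
  then have "(\<forall>x\<in>S. g differentiable (at x)) \<Longrightarrow>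
      Ck_on k S (\<lambda>x. frechet_derivative g (at x) v) = Ck_on k S (\<lambda>x. frechet_derivative h (at x) v)" for v
    by (intro Suc.IH) auto
  then show ?case
    using diff by auto
qed

lemma Ck_on_SucI:
  assumes "open S"
    and "\<And>x. x \<in> S \<Longrightarrow> (g has_derivative g' x) (at x)"
    and "\<And>v. Ck_on k S (\<lambda>x. g' x v)"
  shows "Ck_on (Suc k) S g"
proof -
  have "Ck_on k S (\<lambda>x. frechet_derivative g (at x) v) = Ck_on k S (\<lambda>x. g' x v)" for v
    using assms(2) by (intro Ck_on_cong[OF assms(1)]) (metis frechet_derivative_at)
  then show ?thesis
    using assms(2,3) by (auto intro: differentiableI)
qed

lemma Ck_on_const: "Ck_on k S (\<lambda>x. c)"
  by (induction k arbitrary: c) simp_all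

lemma Ck_on_id:
  assumes "open S"
  shows "Ck_on k S (\<lambda>x. x)"
proof -
  have "Ck_on (Suc k) S (\<lambda>x. x)"
    by (rule Ck_on_SucI[OF assms, where g' = "\<lambda>x v. v"]) (auto simp: Ck_on_const)
  then show ?thesis
    by (rule Ck_on_Suc_imp_Ck_on)
qed

lemma Ck_on_linear:
  assumes "bounded_linear L" "open S" "Ck_on k S f"
  shows "Ck_on k S (\<lambda>x. L (f x))"
  using assms(3)
proof (induction k arbitrary: f)
  case 0
  then show ?case
    using assms(1) by (simp add: bounded_linear.continuous_on)
next
  case (Suc k)
  show ?case
  proof (rule Ck_on_SucI[OF assms(2)])
    fix x assume "x \<in> S"
    show "((\<lambda>x. L (f x)) has_derivative (\<lambda>v. L (frechet_derivative f (at x) v))) (at x)"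
      by (rule bounded_linear.has_derivative[OF assms(1) Ck_on_Suc_has_derivative[OF Suc.prems \<open>x \<in> S\<close>]])
  qed (use Suc in simp)
qed

lemma Ck_on_add:
  assumes "open S"
  shows "Ck_on k S f \<Longrightarrow> Ck_on k S g \<Longrightarrow> Ck_on k S (\<lambda>x. f x + g x)"
proof (induction k arbitrary: f g)
  case 0
  then show ?case by (simp add: continuous_on_add)
next
  case (Suc k)
  show ?case
  proof (rule Ck_on_SucI[OF assms])
    fix x assume "x \<in> S"
    show "((\<lambda>x. f x + g x) has_derivative
        (\<lambda>v. frechet_derivative f (at x) v + frechet_derivative g (at x) v)) (at x)"
      using Suc.prems \<open>x \<in> S\<close> by (intro has_derivative_add Ck_on_Suc_has_derivative)
  qed (use Suc in simp)
qed

lemma Ck_on_scaleR: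
  fixes a :: "'a::euclidean_space \<Rightarrow> real" and b :: "'a \<Rightarrow> 'b::real_normed_vector"
  assumes "open S"
  shows "Ck_on k S a \<Longrightarrow> Ck_on k S b \<Longrightarrow> Ck_on k S (\<lambda>x. a x *\<^sub>R b x)"
proof (induction k arbitrary: a b)
  case 0
  then show ?case by (simp add: continuous_on_scaleR)
next
  case (Suc k)
  show ?case
  proof (rule Ck_on_SucI[OF assms])
    fix x assume "x \<in> S"
    show "((\<lambda>x. a x *\<^sub>R b x) has_derivative (\<lambda>v. a x *\<^sub>R frechet_derivative b (at x) v
        + frechet_derivative a (at x) v *\<^sub>R b x)) (at x)"
      using Suc.prems \<open>x \<in> S\<close> by (intro has_derivative_scaleR Ck_on_Suc_has_derivative)
  next
    fix v
    show "Ck_on k S (\<lambda>x. a x *\<^sub>R frechet_derivative b (at x) v + frechet_derivative a (at x) v *\<^sub>R b x)"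
      using Suc by (intro Ck_on_add[OF assms] Suc.IH) (simp_all add: Ck_on_Suc_imp_Ck_on)
  qed
qed

lemma Ck_on_mult:
  fixes a b :: "'a::euclidean_space \<Rightarrow> real"
  assumes "open S" "Ck_on k S a" "Ck_on k S b"
  shows "Ck_on k S (\<lambda>x. a x * b x)"
  using Ck_on_scaleR[OF assms] by simp

lemma Ck_on_sum:
  assumes "open S" "finite I" "\<And>i. i \<in> I \<Longrightarrow> Ck_on k S (f i)"
  shows "Ck_on k S (\<lambda>x. \<Sum>i\<in>I. f i x)"
  using assms(2,3)
  by (induction I rule: finite_induct) (simp_all add: Ck_on_const Ck_on_add[OF assms(1)])

lemma Ck_on_prod:
  fixes f :: "'i \<Rightarrow> 'a::euclidean_space \<Rightarrow> real"
  assumes "open S" "finite I" "\<And>i. i \<in> I \<Longrightarrow> Ck_on k S (f i)"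
  shows "Ck_on k S (\<lambda>x. \<Prod>i\<in>I. f i x)"
  using assms(2,3)
proof (induction I rule: finite_induct)
  case (insert i I)
  then have "Ck_on k S (\<lambda>x. f i x * (\<Prod>i\<in>I. f i x))"
    by (intro Ck_on_mult[OF assms(1)]) auto
  with insert.hyps show ?case by simp
qed (simp add: Ck_on_const)

lemma Ck_on_Pair:
  assumes "open S"
  shows "Ck_on k S f \<Longrightarrow> Ck_on k S g \<Longrightarrow> Ck_on k S (\<lambda>x. (f x, g x))"
proof (induction k arbitrary: f g)
  case 0
  then show ?case by (simp add: continuous_on_Pair)
next
  case (Suc k)
  show ?case
  proof (rule Ck_on_SucI[OF assms])
    fix x assume "x \<in> S"
    show "((\<lambda>x. (f x, g x)) has_derivative
        (\<lambda>v. (frechet_derivative f (at x) v, frechet_derivative g (at x) v))) (at x)"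
      using Suc.prems \<open>x \<in> S\<close> by (intro has_derivative_Pair Ck_on_Suc_has_derivative)
  next
    fix v
    show "Ck_on k S (\<lambda>x. (frechet_derivative f (at x) v, frechet_derivative g (at x) v))"
      using Suc.prems by (intro Suc.IH) simp_all
  qed
qed

lemma Ck_on_vec_lambda:
  fixes f :: "'a::euclidean_space \<Rightarrow> real^'n"
  assumes "open S" "\<And>i. Ck_on k S (\<lambda>x. f x $ i)"
  shows "Ck_on k S f"
proof -
  have "Ck_on k S (\<lambda>x. \<Sum>i\<in>UNIV. (f x $ i) *\<^sub>R axis i (1::real))"
    by (rule Ck_on_sum[OF assms(1) finite_class.finite_UNIV],
        rule Ck_on_scaleR[OF assms(1) assms(2) Ck_on_const])
  moreover have "(\<Sum>i\<in>UNIV. (f x $ i) *\<^sub>R axis i (1::real)) = f x" for x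
    using basis_expansion[of "f x"] by (simp add: scalar_mult_eq_scaleR)
  ultimately show ?thesis
    by simp
qed

lemma linear_euclidean_expansion:
  fixes L :: "'a::euclidean_space \<Rightarrow> 'b::real_vector"
  assumes "linear L"
  shows "L w = (\<Sum>b\<in>Basis. (w \<bullet> b) *\<^sub>R L b)"
proof -
  have "L w = L (\<Sum>b\<in>Basis. (w \<bullet> b) *\<^sub>R b)"
    by (simp add: euclidean_representation)
  also have "\<dots> = (\<Sum>b\<in>Basis. (w \<bullet> b) *\<^sub>R L b)"
    by (simp add: linear_sum[OF assms] linear_scale[OF assms])
  finally show ?thesis .
qed

lemma Ck_on_compose:
  fixes h :: "'a::euclidean_space \<Rightarrow> 'c::euclidean_space" and g :: "'c \<Rightarrow> 'b::real_normed_vector"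
  assumes "open S" "open T" "h ` S \<subseteq> T"
  shows "Ck_on k T g \<Longrightarrow> Ck_on k S h \<Longrightarrow> Ck_on k S (\<lambda>x. g (h x))"
proof (induction k arbitrary: g)
  case 0
  then show ?case using continuous_on_compose2 assms(3) by auto
next
  case (Suc k)
  show ?case
  proof (rule Ck_on_SucI[OF assms(1), where g' = "\<lambda>x v.
      \<Sum>b\<in>Basis. (frechet_derivative h (at x) v \<bullet> b) *\<^sub>R frechet_derivative g (at (h x)) b"])
    fix x assume "x \<in> S"
    then have dg: "(g has_derivative frechet_derivative g (at (h x))) (at (h x))"
      using assms(3) by (intro Ck_on_Suc_has_derivative[OF Suc.prems(1)]) auto
    have "((\<lambda>x. g (h x)) has_derivative
        (\<lambda>v. frechet_derivative g (at (h x)) (frechet_derivative h (at x) v))) (at x)"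
      by (rule has_derivative_compose[OF Ck_on_Suc_has_derivative[OF Suc.prems(2) \<open>x \<in> S\<close>] dg])
    moreover have "frechet_derivative g (at (h x)) (frechet_derivative h (at x) v) =
        (\<Sum>b\<in>Basis. (frechet_derivative h (at x) v \<bullet> b) *\<^sub>R frechet_derivative g (at (h x)) b)" for v
      by (rule linear_euclidean_expansion[OF has_derivative_linear[OF dg]])
    ultimately show "((\<lambda>x. g (h x)) has_derivative (\<lambda>v.
        \<Sum>b\<in>Basis. (frechet_derivative h (at x) v \<bullet> b) *\<^sub>R frechet_derivative g (at (h x)) b)) (at x)"
      by (simp only:)
  next
    fix v
    have "Ck_on k S (\<lambda>x. frechet_derivative h (at x) v \<bullet> b)" for b
      by (rule Ck_on_linear[OF bounded_linear_inner_left assms(1) Ck_on_Suc_frechet_derivative[OF Suc.prems(2)]])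
    moreover have "Ck_on k S (\<lambda>x. frechet_derivative g (at (h x)) b)" for b
      using Suc.prems by (intro Suc.IH) (simp_all add: Ck_on_Suc_imp_Ck_on)
    ultimately show "Ck_on k S (\<lambda>x.
        \<Sum>b\<in>Basis. (frechet_derivative h (at x) v \<bullet> b) *\<^sub>R frechet_derivative g (at (h x)) b)"
      by (intro Ck_on_sum[OF assms(1)] Ck_on_scaleR[OF assms(1)]) auto
  qed
qed

lemma Ck_on_inverse_nonzero: "Ck_on k (- {0::real}) inverse"
proof (induction k)
  case 0
  show ?case by (simp add: continuous_on_inverse continuous_on_id)
next
  case (Suc k)
  show ?case
  proof (rule Ck_on_SucI[where g' = "\<lambda>y v. - v * (inverse y * inverse y)"])
    fix x :: real assume "x \<in> - {0}"
    then show "(inverse has_derivative (\<lambda>v. - v * (inverse x * inverse x))) (at x)"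
      using has_derivative_inverse'[of x UNIV] by (simp add: mult.commute mult.left_commute)
  next
    fix v :: real
    show "Ck_on k (- {0}) (\<lambda>y. - v * (inverse y * inverse y))"
      using Suc.IH by (intro Ck_on_mult Ck_on_const) auto
  qed auto
qed

lemma Ck_on_inverse:
  fixes a :: "'a::euclidean_space \<Rightarrow> real"
  assumes "open S" "Ck_on k S a" "\<And>x. x \<in> S \<Longrightarrow> a x \<noteq> 0"
  shows "Ck_on k S (\<lambda>x. inverse (a x))"
  using assms by (intro Ck_on_compose[OF assms(1) _ _ Ck_on_inverse_nonzero]) auto

lemma Ck_on_det:
  fixes M :: "'a::euclidean_space \<Rightarrow> real^'n^'n"
  assumes "open S" "\<And>i j. Ck_on k S (\<lambda>x. M x $ i $ j)"
  shows "Ck_on k S (\<lambda>x. det (M x))"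
  unfolding det_def
  using assms by (intro Ck_on_sum Ck_on_mult Ck_on_const Ck_on_prod) (auto simp: finite_permutations)

section \<open>Smooth inverse function theorem\<close>

lemma jacobian_mult_vec:
  fixes g :: "real^'m \<Rightarrow> real^'n"
  assumes "g differentiable (at x)"
  shows "jacobian g (at x) *v w = frechet_derivative g (at x) w"
proof -
  have "(g has_derivative (\<lambda>w. jacobian g (at x) *v w)) (at x)"
    using assms by (rule iffD1[OF jacobian_works])
  then have "frechet_derivative g (at x) = (\<lambda>w. jacobian g (at x) *v w)"
    by (rule frechet_derivative_at[symmetric])
  then show ?thesis
    by simp
qed

lemma jacobian_entry: "jacobian g (at x) $ i $ j = frechet_derivative g (at x) (axis j 1) $ i"
  by (simp add: jacobian_def matrix_def)

lemma Ck_on_jacobian_entry: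
  assumes "open S" "Ck_on (Suc k) S g"
  shows "Ck_on k S (\<lambda>x. jacobian g (at x) $ i $ j)"
  unfolding jacobian_entry
  by (rule Ck_on_linear[OF bounded_linear_vec_nth assms(1) Ck_on_Suc_frechet_derivative[OF assms(2)]])

lemma continuous_on_det_jacobian:
  fixes g :: "real^'n \<Rightarrow> real^'n"
  assumes "open S" "Ck_on (Suc 0) S g"
  shows "continuous_on S (\<lambda>x. det (jacobian g (at x)))"
proof -
  have "Ck_on 0 S (\<lambda>x. det (jacobian g (at x)))"
    by (rule Ck_on_det[OF assms(1)]) (rule Ck_on_jacobian_entry[OF assms])
  then show ?thesis
    by simp
qed

lemma matrix_inv_invertible:
  "invertible A \<Longrightarrow> A ** matrix_inv A = mat 1 \<and> matrix_inv A ** A = mat 1"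
  unfolding matrix_inv_def invertible_def by (rule someI_ex)

lemma matrix_inv_mult_vec_cramer:
  fixes A :: "real^'n^'n"
  assumes "det A \<noteq> 0"
  shows "matrix_inv A *v b = (\<chi> k. det (\<chi> i j. if j = k then b $ i else A $ i $ j) / det A)"
proof -
  have "A ** matrix_inv A = mat 1"
    using assms matrix_inv_invertible invertible_det_nz by blast
  then have "A *v (matrix_inv A *v b) = b"
    by (simp add: matrix_vector_mul_assoc)
  then show ?thesis
    by (rule iffD1[OF cramer[OF assms]])
qed

lemma Ck_on_matrix_inv_mult_vec:
  fixes A :: "'a::euclidean_space \<Rightarrow> real^'n^'n"
  assumes "open S" "\<And>i j. Ck_on k S (\<lambda>x. A x $ i $ j)" "\<And>x. x \<in> S \<Longrightarrow> det (A x) \<noteq> 0"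
  shows "Ck_on k S (\<lambda>x. matrix_inv (A x) *v b)"
proof -
  define C where "C x l = det (\<chi> i j. if j = l then b $ i else A x $ i $ j)" for x l
  have "Ck_on k S (\<lambda>x. if j = l then b $ i else A x $ i $ j)" for i j l
    using assms(2) by (cases "j = l") (simp_all add: Ck_on_const)
  then have "Ck_on k S (\<lambda>x. C x l)" for l
    unfolding C_def by (intro Ck_on_det[OF assms(1)]) simp
  moreover have "Ck_on k S (\<lambda>x. inverse (det (A x)))"
    using assms by (intro Ck_on_inverse Ck_on_det) auto
  ultimately have "Ck_on k S (\<lambda>x. C x l * inverse (det (A x)))" for l
    by (rule Ck_on_mult[OF assms(1)])
  then have "Ck_on k S (\<lambda>x. \<chi> l. C x l / det (A x))"
    by (intro Ck_on_vec_lambda[OF assms(1)]) (simp add: divide_inverse)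
  moreover have "matrix_inv (A x) *v b = (\<chi> l. C x l / det (A x))" if "x \<in> S" for x
    unfolding C_def using assms(3)[OF that] by (rule matrix_inv_mult_vec_cramer)
  ultimately show ?thesis
    using Ck_on_cong[OF assms(1), of "\<lambda>x. matrix_inv (A x) *v b" "\<lambda>x. \<chi> l. C x l / det (A x)"]
    by simp
qed

lemma inverse_function_theorem_jacobian:
  fixes g :: "real^'n \<Rightarrow> real^'n"
  assumes "open S" "Ck_on (Suc 0) S g" "x0 \<in> S" "det (jacobian g (at x0)) \<noteq> 0"
  obtains U V h where "open U" "U \<subseteq> S" "x0 \<in> U" "open V" "homeomorphism U V g h"
    "\<And>y. y \<in> V \<Longrightarrow> (h has_derivative (\<lambda>v. matrix_inv (jacobian g (at (h y))) *v v)) (at y)"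
proof -
  define g' where "g' x = Blinfun (\<lambda>v. jacobian g (at x) *v v)" for x
  have g'_apply: "blinfun_apply (g' x) = (\<lambda>v. jacobian g (at x) *v v)" for x
    unfolding g'_def by (simp add: bounded_linear_Blinfun_apply matrix_vector_mul_bounded_linear)
  have dg: "(g has_derivative blinfun_apply (g' x)) (at x)" if "x \<in> S" for x
    using Ck_on_Suc_has_derivative[OF assms(2) that] g'_apply jacobian_works differentiableI by metis
  have "continuous_on S g'"
  proof (rule continuous_on_blinfun_componentwise)
    fix v :: "real^'n"
    have "continuous_on S (\<lambda>x. frechet_derivative g (at x) v)"
      using Ck_on_Suc_frechet_derivative[OF assms(2)] by simp
    then show "continuous_on S (\<lambda>x. blinfun_apply (g' x) v)"
      by (rule continuous_on_eq) (simp add: g'_apply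
          jacobian_mult_vec[OF differentiableI[OF Ck_on_Suc_has_derivative[OF assms(2)]]])
  qed
  moreover have "Blinfun (\<lambda>v. matrix_inv (jacobian g (at x0)) *v v) o\<^sub>L g' x0 = id_blinfun"
    using assms(3,4) matrix_inv_invertible[of "jacobian g (at x0)"]
    by (intro blinfun_eqI)
      (simp add: bounded_linear_Blinfun_apply g'_apply matrix_vector_mul_assoc invertible_det_nz)
  ultimately obtain U V h h' where UV: "open U" "U \<subseteq> S" "x0 \<in> U" "open V" "homeomorphism U V g h"
    and dh: "\<And>y. y \<in> V \<Longrightarrow> (h has_derivative h' y) (at y)"
    and h': "\<And>y. y \<in> V \<Longrightarrow> h' y = inv (blinfun_apply (g' (h y)))"
    and bij: "\<And>y. y \<in> V \<Longrightarrow> bij (blinfun_apply (g' (h y)))"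
    using inverse_function_theorem[OF assms(1) dg _ assms(3)] by metis
  have "h' y = (\<lambda>v. matrix_inv (jacobian g (at (h y))) *v v)" if "y \<in> V" for y
  proof
    fix v
    have hy: "h y \<in> S"
      using UV(2,5) that by (auto simp: homeomorphism_def)
    have "invertible (jacobian g (at (h y)))"
      using bij[OF that] by (simp add: g'_apply invertible_eq_bij)
    then have "blinfun_apply (g' (h y)) (matrix_inv (jacobian g (at (h y))) *v v) = v"
      by (simp add: g'_apply matrix_vector_mul_assoc matrix_inv_invertible)
    then show "h' y v = matrix_inv (jacobian g (at (h y))) *v v"
      using h'[OF that] bij[OF that] by (metis bij_inv_eq_iff)
  qed
  with UV dh that show ?thesis
    by metis
qed

lemma smooth_local_diffeo:
  fixes g :: "real^'n \<Rightarrow> real^'n"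
  assumes "smooth_on S g" "\<And>x. x \<in> S \<Longrightarrow> det (jacobian g (at x)) \<noteq> 0" "x0 \<in> S"
  obtains N where "x0 \<in> N" "N \<subseteq> S" "diffeo_onto_image N g"
proof -
  have S: "open S" "\<And>k. Ck_on k S g"
    using assms(1) by (simp_all add: smooth_on_def)
  obtain N V h where NV: "open N" "N \<subseteq> S" "x0 \<in> N" "open V" "homeomorphism N V g h"
    and dh: "\<And>y. y \<in> V \<Longrightarrow> (h has_derivative (\<lambda>v. matrix_inv (jacobian g (at (h y))) *v v)) (at y)"
    using inverse_function_theorem_jacobian[OF S assms(3) assms(2)[OF assms(3)]] by blast
  have hV: "h ` V \<subseteq> S" "g ` N = V" "inj_on g N"
    using NV(2,5) unfolding homeomorphism_def by (auto intro: inj_on_inverseI)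
  have the_inv: "the_inv_into N g y = h y" if "y \<in> V" for y
    using NV(5) that unfolding homeomorphism_def by (metis image_eqI the_inv_into_f_f hV(3))
  (* Bootstrap: Dh = (Dg o h)^-1 is C^k as soon as h is, so h is C^(k+1). *)
  have "Ck_on k V h" for k
  proof (induction k)
    case 0
    then show ?case using NV(5) by (simp add: homeomorphism_def)
  next
    case (Suc k)
    show ?case
    proof (rule Ck_on_SucI[OF NV(4) dh])
      fix v
      have "Ck_on k S (\<lambda>x. matrix_inv (jacobian g (at x)) *v v)"
        using S assms(2) by (intro Ck_on_matrix_inv_mult_vec Ck_on_jacobian_entry) auto
      then show "Ck_on k V (\<lambda>y. matrix_inv (jacobian g (at (h y))) *v v)"
        by (rule Ck_on_compose[OF NV(4) S(1) hV(1) _ Suc.IH])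
    qed
  qed
  then have "smooth_on (g ` N) (the_inv_into N g)"
    using Ck_on_cong[OF NV(4) the_inv] hV(2) NV(4) by (simp add: smooth_on_def)
  moreover have "smooth_on N g"
    using NV(1,2) Ck_on_subset[OF S(2)] by (simp add: smooth_on_def)
  ultimately have "diffeo_onto_image N g"
    using NV(1,4) hV by (simp add: diffeo_onto_image_def)
  with NV(2,3) that show ?thesis
    by blast
qed

lemma orientation_reversing_local_diffeo:
  fixes g :: "real^'n \<Rightarrow> real^'n"
  assumes "smooth_on S g" "x0 \<in> S" "det (jacobian g (at x0)) < 0"
  obtains N where "x0 \<in> N" "N \<subseteq> S" "diffeo_onto_image N g" "orientation_reversing_on N g"
proof -
  define S' where "S' = S \<inter> (\<lambda>x. det (jacobian g (at x))) -` {..<0}"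
  have S: "open S" "\<And>k. Ck_on k S g"
    using assms(1) by (simp_all add: smooth_on_def)
  have "open S'"
    unfolding S'_def using S by (intro continuous_open_preimage continuous_on_det_jacobian) auto
  then have "smooth_on S' g"
    using Ck_on_subset[OF S(2)] by (auto simp: smooth_on_def S'_def)
  moreover have "\<And>x. x \<in> S' \<Longrightarrow> det (jacobian g (at x)) \<noteq> 0" "x0 \<in> S'"
    using assms(2,3) by (auto simp: S'_def)
  ultimately obtain N where N: "x0 \<in> N" "N \<subseteq> S'" "diffeo_onto_image N g"
    by (rule smooth_local_diffeo)
  moreover have "orientation_reversing_on N g"
    using N(2) by (auto simp: orientation_reversing_on_def jacobian_def S'_def)
  ultimately show ?thesis
    using that by (auto simp: S'_def)
qed

section \<open>Rank-one perturbations of the identity\<close>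

lemma det_identity_column_replace:
  fixes a :: "real^'n"
  shows "det (\<chi> i j. if j = k then a $ i else if i = j then 1 else 0 :: real^'n^'n) = a $ k"
proof -
  have "(\<chi> i j. if j = k then (mat 1 *v a) $ i else (mat 1 :: real^'n^'n) $ i $ j)
      = (\<chi> i j. if j = k then a $ i else if i = j then 1 else 0 :: real^'n^'n)"
    unfolding matrix_vector_mul_lid by (simp add: vec_eq_iff mat_def)
  then show ?thesis
    using cramer_lemma[of k "mat 1 :: real^'n^'n" a] by simp
qed

lemma identity_plus_rank_one_conjugate:
  fixes a b :: "real^'n" and k :: 'n
  defines "Q \<equiv> (\<chi> i j. if j = k then a $ i else if i = j then 1 else 0) :: real^'n^'n"
    and "d \<equiv> (\<chi> j. if j = k then a \<bullet> b else b $ j) :: real^'n"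
  shows "(\<chi> i j. (if i = j then 1 else 0) + a $ i * b $ j) ** Q =
    Q ** (\<chi> i j. if i = k then (if k = j then 1 else 0) + d $ j else if i = j then 1 else 0)"
    (is "?M ** Q = Q ** ?R")
proof -
  have "(?M ** Q) $ i $ j = (Q ** ?R) $ i $ j" for i j
  proof (cases "j = k")
    case True
    have "(?M ** Q) $ i $ j = (\<Sum>l\<in>UNIV. ((if i = l then 1 else 0) + a $ i * b $ l) * a $ l)"
      using True by (simp add: matrix_matrix_mult_def Q_def)
    also have "\<dots> = a $ i * (1 + a \<bullet> b)"
      by (simp add: distrib_right distrib_left sum.distrib sum_distrib_left inner_vec_def
          mult_if_delta mult_delta_right mult.commute mult.left_commute)
    also have "\<dots> = (\<Sum>l\<in>UNIV. if l = k then a $ i * (1 + a \<bullet> b) else 0)"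
      by simp
    also have "\<dots> = (Q ** ?R) $ i $ j"
      unfolding matrix_matrix_mult_def vec_lambda_beta
      by (rule sum.cong) (auto simp: Q_def d_def True)
    finally show ?thesis .
  next
    case False
    have "(?M ** Q) $ i $ j =
        (\<Sum>l\<in>UNIV. if l = j then (if i = j then 1 else 0) + a $ i * b $ j else 0)"
      unfolding matrix_matrix_mult_def vec_lambda_beta
      by (rule sum.cong) (use False in \<open>auto simp: Q_def\<close>)
    also have "\<dots> = (\<Sum>l\<in>UNIV. (if l = k then a $ i * b $ j else 0) +
        (if l = j then (if i = j then 1 else 0) else 0))"
      by (simp add: sum.distrib)
    also have "\<dots> = (Q ** ?R) $ i $ j"
      unfolding matrix_matrix_mult_def vec_lambda_beta
      by (rule sum.cong) (use False in \<open>auto simp: Q_def d_def\<close>)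
    finally show ?thesis .
  qed
  then show ?thesis
    by (simp add: vec_eq_iff)
qed

lemma det_identity_plus_rank_one:
  fixes a b :: "real^'n"
  shows "det (\<chi> i j. (if i = j then 1 else 0) + a $ i * b $ j) = 1 + a \<bullet> b"
proof (cases "a = 0")
  case True
  then have "(\<chi> i j. (if i = j then 1 else 0) + a $ i * b $ j) = (mat 1 :: real^'n^'n)"
    by (simp add: vec_eq_iff mat_def)
  with True show ?thesis
    by simp
next
  case False
  then obtain k where "a $ k \<noteq> 0"
    by (auto simp: vec_eq_iff)
  define Q :: "real^'n^'n" where "Q = (\<chi> i j. if j = k then a $ i else if i = j then 1 else 0)"
  define d :: "real^'n" where "d = (\<chi> j. if j = k then a \<bullet> b else b $ j)"
  define R :: "real^'n^'n"
    where "R = (\<chi> i j. if i = k then (if k = j then 1 else 0) + d $ j else if i = j then 1 else 0)"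
  have "transpose R =
      (\<chi> i j. if j = k then (\<chi> i. (if i = k then 1 else 0) + d $ i :: real^'n) $ i else if i = j then 1 else 0)"
    by (simp add: R_def transpose_def vec_eq_iff)
  then have "det (transpose R) = (\<chi> i. (if i = k then 1 else 0) + d $ i :: real^'n) $ k"
    by (simp only: det_identity_column_replace)
  then have "det R = 1 + a \<bullet> b"
    by (simp add: d_def)
  moreover have "det Q = a $ k"
    unfolding Q_def by (rule det_identity_column_replace)
  moreover have "(\<chi> i j. (if i = j then 1 else 0) + a $ i * b $ j) ** Q = Q ** R"
    unfolding Q_def R_def d_def by (rule identity_plus_rank_one_conjugate)
  then have "det (\<chi> i j. (if i = j then 1 else 0) + a $ i * b $ j) * det Q = det Q * det R"
    by (simp flip: det_mul)
  ultimately show ?thesis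
    using \<open>a $ k \<noteq> 0\<close> by simp
qed

lemma det_matrix_id_plus_rank_one:
  fixes l :: "real^'n \<Rightarrow> real"
  assumes "linear l"
  shows "det (matrix (\<lambda>v. l v *\<^sub>R a + v)) = 1 + l a"
proof -
  define b :: "real^'n" where "b = (\<chi> j. l (axis j 1))"
  have "matrix (\<lambda>v. l v *\<^sub>R a + v) = (\<chi> i j. (if i = j then 1 else 0) + a $ i * b $ j)"
    by (simp add: matrix_def vec_eq_iff b_def axis_def mult.commute)
  moreover have "l a = l (\<Sum>j\<in>UNIV. a $ j *\<^sub>R axis j 1)"
    using basis_expansion[of a] by (simp add: scalar_mult_eq_scaleR)
  then have "l a = a \<bullet> b"
    by (simp add: linear_sum[OF assms] linear_scale[OF assms] inner_vec_def b_def)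
  ultimately show ?thesis
    by (simp add: det_identity_plus_rank_one)
qed

section \<open>The level flow map\<close>

definition alpha_inv :: "real \<Rightarrow> real \<Rightarrow> real" where
  "alpha_inv c y = (if c = 0 then y else ln (1 + 2 * c * y) / (2 * c))"

lemma the_alpha_eq_alpha_inv:
  assumes "0 < 1 + 2 * c * y"
  shows "(THE t. alpha c t = y) = alpha_inv c y"
proof (rule the_equality)
  show "alpha c (alpha_inv c y) = y"
    using assms by (simp add: alpha_def alpha_inv_def)
next
  fix t
  assume t: "alpha c t = y"
  show "t = alpha_inv c y"
  proof (cases "c = 0")
    case True
    with t show ?thesis
      by (simp add: alpha_def alpha_inv_def)
  next
    case False
    with t have "exp (2 * c * t) = 1 + 2 * c * y"
      by (simp add: alpha_def field_simps)
    then have "2 * c * t = ln (1 + 2 * c * y)"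
      by (metis ln_exp)
    with False show ?thesis
      by (simp add: alpha_inv_def field_simps)
  qed
qed

lemma alpha_inv_has_real_derivative:
  assumes "0 < 1 + 2 * c * y"
  shows "(alpha_inv c has_real_derivative inverse (1 + 2 * c * y)) (at y)"
proof (cases "c = 0")
  case True
  then show ?thesis
    by (simp add: alpha_inv_def[abs_def])
next
  case False
  have "((\<lambda>y. ln (1 + 2 * c * y) / (2 * c)) has_real_derivative
      inverse (1 + 2 * c * y) * (2 * c) / (2 * c)) (at y)"
    using assms by (auto intro!: derivative_eq_intros simp: inverse_eq_divide)
  with False show ?thesis
    by (simp add: alpha_inv_def[abs_def] inverse_eq_divide)
qed

lemma Ck_on_alpha_inv: "Ck_on k {y. 0 < 1 + 2 * c * y} (alpha_inv c)"
proof -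
  let ?P = "{y :: real. 0 < 1 + 2 * c * y}"
  have P: "open ?P"
    by (intro open_Collect_less continuous_intros)
  have "Ck_on k ?P (\<lambda>y. 1 + 2 * c * y)"
    by (intro Ck_on_add[OF P] Ck_on_mult[OF P] Ck_on_const Ck_on_id[OF P])
  then have "Ck_on k ?P (\<lambda>y. inverse (1 + 2 * c * y) * v)" for v
    by (intro Ck_on_mult[OF P] Ck_on_inverse[OF P] Ck_on_const) auto
  then have "Ck_on (Suc k) ?P (alpha_inv c)"
    using alpha_inv_has_real_derivative
    by (intro Ck_on_SucI[OF P]) (auto simp: has_field_derivative_def mult.commute)
  then show ?thesis
    by (rule Ck_on_Suc_imp_Ck_on)
qed

lemma Ck_on_flow_at_time:
  assumes "is_local_flow U V D Psi" "open S" "Ck_on k S tau" "\<And>x. x \<in> S \<Longrightarrow> (tau x, x) \<in> D"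
  shows "Ck_on k S (\<lambda>x. Psi (tau x) x)"
proof -
  have D: "open D" "Ck_on k D (\<lambda>(t, x). Psi t x)"
    using assms(1) unfolding is_local_flow_def smooth_on_def by blast+
  have "(\<lambda>x. (tau x, x)) ` S \<subseteq> D"
    using assms(4) by blast
  then have "Ck_on k S (\<lambda>x. (\<lambda>(t, x). Psi t x) (tau x, x))"
    by (rule Ck_on_compose[OF assms(2) D(1) _ D(2) Ck_on_Pair[OF assms(2,3) Ck_on_id[OF assms(2)]]])
  then show ?thesis
    by simp
qed

lemma has_derivative_flow_at_time:
  assumes "is_local_flow U V D Psi" "x0 \<in> U" "(tau has_derivative T) (at x0)" "tau x0 = 0"
  shows "((\<lambda>x. Psi (tau x) x) has_derivative (\<lambda>v. T v *\<^sub>R V x0 + v)) (at x0)"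
proof -
  define Phi where "Phi = (\<lambda>(t, x). Psi t x)"
  define L where "L = frechet_derivative Phi (at (0, x0))"
  note flow = assms(1)[unfolded is_local_flow_def smooth_on_def]
  have D: "open D" "(0, x0) \<in> D" "\<And>x. (0, x) \<in> D \<Longrightarrow> x \<in> U"
    using flow assms(2) by auto
  have Psi0: "\<And>x. x \<in> U \<Longrightarrow> Psi 0 x = x"
    using flow by blast
  have Phi: "Ck_on (Suc 0) D Phi"
    using flow unfolding Phi_def by blast
  have "((\<lambda>s. Psi s x0) has_vector_derivative V (Psi 0 x0)) (at 0)"
    using flow D(2) by blast
  then have dtime: "((\<lambda>s. Psi s x0) has_derivative (\<lambda>s. s *\<^sub>R V x0)) (at 0)"
    using Psi0 assms(2) by (simp add: has_vector_derivative_def)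
  have dPhi: "(Phi has_derivative L) (at (0, x0))"
    unfolding L_def using Phi D(2) by (rule Ck_on_Suc_has_derivative)
  have "((\<lambda>s. Psi s x0) has_derivative (\<lambda>s. L (s, 0))) (at 0)"
    using has_derivative_compose[OF has_derivative_Pair[OF has_derivative_ident has_derivative_const] dPhi]
    by (simp add: Phi_def)
  then have L_time: "L (s, 0) = s *\<^sub>R V x0" for s
    using dtime has_derivative_unique by metis
  have "((\<lambda>x. Psi 0 x) has_derivative (\<lambda>w. L (0, w))) (at x0)"
    using has_derivative_compose[OF has_derivative_Pair[OF has_derivative_const has_derivative_ident] dPhi]
    by (simp add: Phi_def)
  moreover have "((\<lambda>x. Psi 0 x) has_derivative (\<lambda>w. w)) (at x0)"
  proof (rule has_derivative_transform_within_open[OF has_derivative_ident])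
    show "open (Pair 0 -` D)"
      using D(1) by (intro open_vimage continuous_intros)
  qed (use D Psi0 in auto)
  ultimately have L_space: "L (0, w) = w" for w
    using has_derivative_unique by metis
  have "L (s, w) = s *\<^sub>R V x0 + w" for s w
    using linear_add[OF has_derivative_linear[OF dPhi], of "(s, 0)" "(0, w)"] L_time L_space by simp
  moreover have "((\<lambda>x. Phi (tau x, x)) has_derivative (\<lambda>v. L (T v, v))) (at x0)"
    using has_derivative_compose[OF has_derivative_Pair[OF assms(3) has_derivative_ident]] dPhi assms(4)
    by simp
  ultimately show ?thesis
    by (simp add: Phi_def)
qed

lemma level_flow_map_eq:
  "0 < 1 + 2 * c * f x \<Longrightarrow> level_flow_map c f Psi x = Psi (alpha_inv c (f x)) x"
  by (simp add: level_flow_map_def the_alpha_eq_alpha_inv)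

lemma has_derivative_alpha_inv_comp:
  assumes "(f has_derivative f') (at x0)" "f x0 = 0"
  shows "((\<lambda>x. alpha_inv c (f x)) has_derivative f') (at x0)"
proof -
  have "(alpha_inv c has_real_derivative 1) (at (f x0))"
    using alpha_inv_has_real_derivative[of c 0] assms(2) by simp
  then have "((\<lambda>x. alpha_inv c (f x)) has_derivative (\<lambda>v. 1 * f' v)) (at x0)"
    by (rule has_derivative_compose[OF assms(1) has_field_derivative_imp_has_derivative])
  then show ?thesis
    by simp
qed

lemma level_flow_map_local:
  fixes f :: "real^'n \<Rightarrow> real"
  assumes "is_local_flow U V D Psi" "W \<subseteq> U" "x0 \<in> W" "smooth_on W f" "f x0 = 0"
  obtains S where "x0 \<in> S" "S \<subseteq> W" "smooth_on S (level_flow_map c f Psi)"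
    "(level_flow_map c f Psi has_derivative (\<lambda>v. frechet_derivative f (at x0) v *\<^sub>R V x0 + v)) (at x0)"
proof -
  have W: "open W" "\<And>k. Ck_on k W f"
    using assms(4) by (simp_all add: smooth_on_def)
  define P where "P = {y :: real. 0 < 1 + 2 * c * y}"
  define tau where "tau x = alpha_inv c (f x)" for x
  define W' where "W' = W \<inter> f -` P"
  define S where "S = W' \<inter> (\<lambda>x. (tau x, x)) -` D"
  have P: "open P"
    unfolding P_def by (intro open_Collect_less continuous_intros)
  have W': "open W'"
    unfolding W'_def using W(1) W(2)[of 0] P by (intro continuous_open_preimage) simp_all
  have tau: "Ck_on k W' tau" for k
  proof -
    have "f ` W' \<subseteq> P" "Ck_on k P (alpha_inv c)" "Ck_on k W' f"
      using Ck_on_alpha_inv Ck_on_subset[OF W(2)] by (auto simp: W'_def P_def)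
    then show ?thesis
      unfolding tau_def[abs_def] by (rule Ck_on_compose[OF W' P])
  qed
  have "open S"
    unfolding S_def using Ck_on_Pair[OF W' tau[of 0] Ck_on_id[OF W']] assms(1) W'
    by (intro continuous_open_preimage) (simp_all add: is_local_flow_def)
  have "tau x0 = 0"
    using assms(5) by (simp add: tau_def alpha_inv_def)
  then have "x0 \<in> S" "S \<subseteq> W"
    using assms(1,2,3,5) by (auto simp: S_def W'_def P_def is_local_flow_def)
  have level: "level_flow_map c f Psi x = Psi (tau x) x" if "x \<in> S" for x
    using that by (simp add: level_flow_map_eq tau_def S_def W'_def P_def)
  have "Ck_on k S (\<lambda>x. Psi (tau x) x)" for k
    using assms(1) \<open>open S\<close> Ck_on_subset[OF tau] by (rule Ck_on_flow_at_time) (auto simp: S_def)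
  then have "smooth_on S (level_flow_map c f Psi)"
    using Ck_on_cong[OF \<open>open S\<close> level] \<open>open S\<close> by (simp add: smooth_on_def)
  moreover have "(tau has_derivative frechet_derivative f (at x0)) (at x0)"
    unfolding tau_def[abs_def] using Ck_on_Suc_has_derivative[OF W(2) assms(3)] assms(5)
    by (rule has_derivative_alpha_inv_comp)
  then have "((\<lambda>x. Psi (tau x) x) has_derivative
      (\<lambda>v. frechet_derivative f (at x0) v *\<^sub>R V x0 + v)) (at x0)"
    using assms(2,3) \<open>tau x0 = 0\<close> by (intro has_derivative_flow_at_time[OF assms(1)]) auto
  then have "(level_flow_map c f Psi has_derivative
      (\<lambda>v. frechet_derivative f (at x0) v *\<^sub>R V x0 + v)) (at x0)"
    by (rule has_derivative_transform_within_open[OF _ \<open>open S\<close> \<open>x0 \<in> S\<close>]) (simp add: level)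
  ultimately show ?thesis
    using that \<open>x0 \<in> S\<close> \<open>S \<subseteq> W\<close> by blast
qed

theorem mainTheorem7:
  fixes U :: "(real^'n) set" and F :: "real^'n \<Rightarrow> real^'n \<Rightarrow> real"
    and V :: "real^'n \<Rightarrow> real^'n" and c :: real
    and D :: "(real \<times> (real^'n)) set" and Psi :: "real \<Rightarrow> real^'n \<Rightarrow> real^'n"
    and W :: "(real^'n) set" and f :: "real^'n \<Rightarrow> real" and gradf :: "real^'n \<Rightarrow> real^'n"
    and x0 :: "real^'n"
  assumes "finsler_metric U F"
    and "smooth_on U V"
    and "is_local_flow U V D Psi"
    and "homothetic F D Psi c"
    and "\<forall>x\<in>U. F x (- V x) > 1"
    and "open W" and "W \<subseteq> U" and "x0 \<in> W"
    and "smooth_on W f" and "f x0 = 0"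
    and "\<forall>x\<in>W. is_finsler_gradient F f x (gradf x)"
    and "\<forall>x\<in>W. F x (gradf x) = 1"
    and "\<forall>x\<in>W. fund_tensor F x (gradf x) (gradf x) (V x) < -1"
  shows "\<exists>N. x0 \<in> N \<and> N \<subseteq> W \<and>
           diffeo_onto_image N (level_flow_map c f Psi) \<and>
           orientation_reversing_on N (level_flow_map c f Psi)"
proof -
  obtain S where S: "x0 \<in> S" "S \<subseteq> W" "smooth_on S (level_flow_map c f Psi)"
    and dPsi: "(level_flow_map c f Psi has_derivative
      (\<lambda>v. frechet_derivative f (at x0) v *\<^sub>R V x0 + v)) (at x0)"
    using level_flow_map_local[OF assms(3,7,8,9,10)] by blast
  have "Ck_on (Suc 0) W f"
    using assms(9) unfolding smooth_on_def by blast
  then have "linear (frechet_derivative f (at x0))"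
    using assms(8) by (blast intro: has_derivative_linear Ck_on_Suc_has_derivative)
  then have "det (jacobian (level_flow_map c f Psi) (at x0)) = 1 + frechet_derivative f (at x0) (V x0)"
    unfolding jacobian_def frechet_derivative_at[OF dPsi, symmetric]
    by (rule det_matrix_id_plus_rank_one)
  moreover have "frechet_derivative f (at x0) (V x0) < -1"
    using assms(8,11,13) by (auto simp: is_finsler_gradient_def)
  ultimately obtain N where "x0 \<in> N" "N \<subseteq> S" "diffeo_onto_image N (level_flow_map c f Psi)"
    "orientation_reversing_on N (level_flow_map c f Psi)"
    using orientation_reversing_local_diffeo[OF S(3,1)] by auto
  with S(2) show ?thesis
    by blast
qed

end
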